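(* If the equations $\frac{u(\mathfrak{z}_2)-u(\mathfrak{z}_1)}{u(\mathfrak{z}_3)-u(\mathfrak{z}_2)}=\frac{v(\mathfrak{z}_3)-v(\mathfrak{z}_2)}{v(\mathfrak{z}_1)-v(\mathfrak{z}_3)}$ hold on all positively oriented elementary triangles, then the constraints \[ \alpha u=k\frac{f_0g_0f_3}{f_0g_0+g_0f_3+f_3g_3}+\ell\frac{f_2g_2f_5}{f_2g_2+g_2f_5+f_5g_5}+m\frac{f_4g_4f_1}{f_4g_4+g_4f_1+f_1g_1}, \] \[ \beta v=k\frac{g_0f_3g_3}{f_0g_0+g_0f_3+f_3g_3}+\ell\frac{g_2f_5g_5}{f_2g_2+g_2f_5+f_5g_5}+m\frac{g_4f_1g_1}{f_4g_4+g_4f_1+f_1g_1} \] (at every vertex) imply a similar equation for the field $w$ (vanishing at $\mathfrak{z}=0$): \begin{equation} \gamma w=k\frac{1}{f_0g_0+g_0f_3+f_3g_3}+\ell\frac{1}{f_2g_2+g_2f_5+f_5g_5}+m\frac{1}{f_4g_4+g_4f_1+f_1g_1}, \end{equation} where $\gamma=1-\alpha-\beta$.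
   Context: On the regular triangular lattice with vertices $\mathfrak{z}=k+\ell\omega+m\omega^2$ ($\omega=e^{2\pi i/3}$), $u,v$ are complex functions on vertices vanishing at $\mathfrak{z}=0$, and $w$ is the third field: $w(\mathfrak{z}_2)-w(\mathfrak{z}_1)=1/\big((u(\mathfrak{z}_2)-u(\mathfrak{z}_1))(v(\mathfrak{z}_2)-v(\mathfrak{z}_1))\big)$ for every positively oriented edge $(\mathfrak{z}_1,\mathfrak{z}_2)$ (i.e. $\mathfrak{z}_2-\mathfrak{z}_1\in\{1,\omega,\omega^2\}$), with $w(0)=0$. Positively oriented elementary triangles have consecutive vertices with differences in $\{1,\omega,\omega^2\}$. At a vertex $\mathfrak{z}$ with representative $(k,\ell,m)$, $u=u(\mathfrak{z})$, $v=v(\mathfrak{z})$, $w=w(\mathfrak{z})$, and for the edges $\mathfrak{e}_0=(\mathfrak{z},\mathfrak{z}+1)$, $\mathfrak{e}_2=(\mathfrak{z},\mathfrak{z}+\omega)$, $\mathfrak{e}_4=(\mathfrak{z},\mathfrak{z}+\omega^2)$, $\mathfrak{e}_1=(\mathfrak{z}-\omega^2,\mathfrak{z})$, $\mathfrak{e}_3=(\mathfrak{z}-1,\mathfrak{z})$, $\mathfrak{e}_5=(\mathfrak{z}-\omega,\mathfrak{z})$, $f_j$, $g_j$ are the increments of $u$, $v$ along $\mathfrak{e}_j$ (end minus start). $\alpha,\beta\in\mathbb C$. *)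

theory Defs
  imports Complex_Main
begin

definition omega :: complex where
  "omega = cis (2 * pi / 3)"

definition vtx :: "int \<Rightarrow> int \<Rightarrow> int \<Rightarrow> complex" where
  "vtx k l m = of_int k + of_int l * omega + of_int m * omega ^ 2"

definition lattice :: "complex set" where
  "lattice = {z. \<exists>k l m. z = vtx k l m}"

definition posdir :: "complex set" where
  "posdir = {1, omega, omega ^ 2}"

text \<open>Increment (end minus start) of a field F along the edge e_j at vertex z:
  e0=(z,z+1), e2=(z,z+omega), e4=(z,z+omega^2),
  e1=(z-omega^2,z), e3=(z-1,z), e5=(z-omega,z).\<close>
definition incr :: "(complex \<Rightarrow> complex) \<Rightarrow> complex \<Rightarrow> nat \<Rightarrow> complex" where
  "incr F z j =
     (if j = 0 then F (z + 1) - F z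
      else if j = 2 then F (z + omega) - F z
      else if j = 4 then F (z + omega ^ 2) - F z
      else if j = 1 then F z - F (z - omega ^ 2)
      else if j = 3 then F z - F (z - 1)
      else F z - F (z - omega))"

definition dnm :: "(complex \<Rightarrow> complex) \<Rightarrow> (complex \<Rightarrow> complex) \<Rightarrow> complex \<Rightarrow> nat \<Rightarrow> nat \<Rightarrow> complex" where
  "dnm u v z a b = incr u z a * incr v z a + incr v z a * incr u z b + incr u z b * incr v z b"

end

theory Submission
  imports Defs
begin

text \<open>
  Write \<open>\<gamma> = 1 - \<alpha> - \<beta>\<close> and, at the vertex with coordinates \<open>c = (k, l, m)\<close>, consider the
  defect \<open>\<gamma> w - \<Sum>\<^sub>e c\<^sub>e / D\<^sub>e\<close>, the sum running over the three edge directions \<open>e\<close>. It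
  vanishes at the origin, so it suffices that it does not change along an edge \<open>z \<rightarrow> z + d\<close>,
  where the coordinate of \<open>d\<close> grows by one. Let \<open>f, g\<close> be the increments of \<open>u, v\<close> along the
  edge. Dividing the increments of the \<open>u\<close>- and \<open>v\<close>-constraints by \<open>f\<close> and \<open>g\<close> and adding
  \<open>f g\<close> times the increment of \<open>\<Sum>\<^sub>e c\<^sub>e / D\<^sub>e\<close> gives \<open>\<Sum>\<^sub>e c\<^sub>e \<Delta>W\<^sub>e\<close> plus the weight
  \<open>W\<^sub>d = 1\<close> of the edge itself, where
  \<open>W\<^sub>e = (f g + f\<^sub>e g\<^sub>e f'\<^sub>e / f + g\<^sub>e f'\<^sub>e g'\<^sub>e / g) / D\<^sub>e\<close>
  (unprimed: outgoing, primed: incoming increments in direction \<open>e\<close>).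
  The triangle equations, in the polynomial form \<open>f\<^sub>d g\<^sub>d + g\<^sub>d f'\<^sub>e + f'\<^sub>e g'\<^sub>e = 0\<close> for
  \<open>d \<noteq> e\<close>, show that \<open>W\<^sub>e\<close> is the same at both ends of the edge. Hence
  \<open>f g \<Delta>(\<Sum>\<^sub>e c\<^sub>e / D\<^sub>e) + \<alpha> + \<beta> = 1\<close>, i.e. \<open>\<Delta>(\<Sum>\<^sub>e c\<^sub>e / D\<^sub>e) = \<gamma> / (f g) = \<gamma> \<Delta>w\<close>.
\<close>

definition zigzag :: "'a::comm_ring \<Rightarrow> 'a \<Rightarrow> 'a \<Rightarrow> 'a \<Rightarrow> 'a" where
  "zigzag a b c d = a * b + b * c + c * d"

definition edge_weight :: "'a::field \<Rightarrow> 'a \<Rightarrow> 'a \<Rightarrow> 'a \<Rightarrow> 'a \<Rightarrow> 'a \<Rightarrow> 'a" where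
  "edge_weight f g r s p q = (f * g + r * s * p / f + s * p * q / g) / zigzag r s p q"

lemma edge_weight_diag:
  fixes f g p q r s :: "'a::field"
  assumes "f \<noteq> 0" "g \<noteq> 0"
  shows "zigzag f g p q \<noteq> 0 \<Longrightarrow> edge_weight f g f g p q = 1"
    and "zigzag r s f g \<noteq> 0 \<Longrightarrow> edge_weight f g r s f g = 1"
  using assms by (simp_all add: edge_weight_def zigzag_def ac_simps)

lemma edge_weight_at_tail:
  fixes f g a b p q r s :: "'a::field"
  assumes "zigzag f g p q = 0" "zigzag f g a b = 0" "zigzag r s a b = 0"
    and "f \<noteq> 0" "g \<noteq> 0" "zigzag r s p q \<noteq> 0"
  shows "edge_weight f g r s p q = (f * f + f * p + a * p) / (f * (a - p))"
proof -
  have D: "zigzag r s p q = (g - s) * (a - p)"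
    using assms(1-3) unfolding zigzag_def by algebra
  have N: "f * g * f * g + r * s * p * g + s * p * q * f = g * (g - s) * (f * f + f * p + a * p)"
    using assms(1-3) unfolding zigzag_def by algebra
  have "g - s \<noteq> 0" using assms(6) D by auto
  have "edge_weight f g r s p q
      = (f * g * f * g + r * s * p * g + s * p * q * f) / (f * g * zigzag r s p q)"
    using assms(4,5) unfolding edge_weight_def by (simp add: field_simps)
  also have "\<dots> = (g * (g - s)) * (f * f + f * p + a * p) / ((g * (g - s)) * (f * (a - p)))"
    unfolding N D by (simp add: ac_simps)
  also have "\<dots> = (f * f + f * p + a * p) / (f * (a - p))"
    using \<open>g - s \<noteq> 0\<close> assms(5) by simp
  finally show ?thesis .
qed

lemma edge_weight_at_head:
  fixes f g a b p q p' q' :: "'a::field"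
  assumes "zigzag f g p q = 0" "zigzag f g a b = 0" "zigzag (- (f + p)) (- (g + q)) p' q' = 0"
    and "f \<noteq> 0" "g \<noteq> 0" "zigzag (- (f + a)) (- (g + b)) p' q' \<noteq> 0"
  shows "edge_weight f g (- (f + a)) (- (g + b)) p' q' = (g * g + g * q + b * q) / (g * (b - q))"
proof -
  let ?D = "zigzag (- (f + a)) (- (g + b)) p' q'"
  have D: "?D = (f - p') * (b - q)"
    using assms(1-3) unfolding zigzag_def by algebra
  have N: "f * g * f * g + (f + a) * (g + b) * p' * g - (g + b) * p' * q' * f
      = f * (f - p') * (g * g + g * q + b * q)"
    using assms(1-3) unfolding zigzag_def by algebra
  have "f - p' \<noteq> 0" using assms(6) D by auto
  have "edge_weight f g (- (f + a)) (- (g + b)) p' q'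
      = (f * g * f * g + (f + a) * (g + b) * p' * g - (g + b) * p' * q' * f) / (f * g * ?D)"
    using assms(4,5) unfolding edge_weight_def by (simp add: field_simps)
  also have "\<dots> = (f * (f - p')) * (g * g + g * q + b * q) / ((f * (f - p')) * (g * (b - q)))"
    unfolding N D by (simp add: ac_simps)
  also have "\<dots> = (g * g + g * q + b * q) / (g * (b - q))"
    using \<open>f - p' \<noteq> 0\<close> assms(4) by simp
  finally show ?thesis .
qed

text \<open>
  Here \<open>(f, g)\<close> are the increments along an edge \<open>z \<rightarrow> z + d\<close>; \<open>(r, s)\<close> and \<open>(p, q)\<close> the
  outgoing and incoming increments at \<open>z\<close> in a second direction \<open>e\<close>; \<open>(a, b)\<close> the incoming
  increment at \<open>z\<close> in the third direction; \<open>(p', q')\<close> the incoming increment in direction \<open>e\<close>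
  at \<open>z + d\<close>, whose outgoing one is \<open>-(f + a), -(g + b)\<close>. The two weights agree because,
  by the two lemmas above, each is determined by the two triangles adjacent to the edge.
\<close>

lemma edge_weight_shift:
  fixes f g a b p q r s p' q' :: "'a::field"
  assumes "zigzag f g p q = 0" "zigzag f g a b = 0" "zigzag r s a b = 0"
    and "zigzag (- (f + p)) (- (g + q)) p' q' = 0"
    and "f \<noteq> 0" "g \<noteq> 0" "zigzag r s p q \<noteq> 0" "zigzag (- (f + a)) (- (g + b)) p' q' \<noteq> 0"
  shows "edge_weight f g (- (f + a)) (- (g + b)) p' q' = edge_weight f g r s p q"
proof -
  have "zigzag r s p q = (g - s) * (a - p)" "zigzag (- (f + a)) (- (g + b)) p' q' = (f - p') * (b - q)"
    using assms(1-4) unfolding zigzag_def by algebra+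
  then have "a - p \<noteq> 0" "b - q \<noteq> 0" using assms(7,8) by auto
  have "(f * f + f * p + a * p) * (g * (b - q)) = (g * g + g * q + b * q) * (f * (a - p))"
    using assms(1,2) unfolding zigzag_def by algebra
  then have "(f * f + f * p + a * p) / (f * (a - p)) = (g * g + g * q + b * q) / (g * (b - q))"
    using \<open>a - p \<noteq> 0\<close> \<open>b - q \<noteq> 0\<close> assms(5,6) by (simp add: frac_eq_eq)
  then show ?thesis
    using edge_weight_at_tail[OF assms(1-3,5-7)] edge_weight_at_head[OF assms(1,2,4-6,8)] by simp
qed

lemma omega_squared: "omega ^ 2 = - 1 - omega"
  by (simp add: omega_def complex_eq_iff power2_eq_square cos_120 sin_120 cos_120' sin_120')

lemma posdir_distinct: "omega \<noteq> 1" "omega ^ 2 \<noteq> 1" "omega ^ 2 \<noteq> omega"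
  using sin_120 unfolding omega_squared complex_eq_iff by (auto simp: omega_def)

lemma posdir_third:
  assumes "d \<in> posdir" "e \<in> posdir" "d \<noteq> e"
  shows "- (d + e) \<in> posdir \<and> - (d + e) \<noteq> d \<and> - (d + e) \<noteq> e"
proof -
  have third: "- (1 + omega) = omega ^ 2" "- (omega + 1) = omega ^ 2"
    "- (1 + omega ^ 2) = omega" "- (omega ^ 2 + 1) = omega"
    "- (omega + omega ^ 2) = 1" "- (omega ^ 2 + omega) = 1"
    unfolding omega_squared by simp_all
  from assms consider "d = 1" "e = omega" | "d = omega" "e = 1" | "d = 1" "e = omega ^ 2"
    | "d = omega ^ 2" "e = 1" | "d = omega" "e = omega ^ 2" | "d = omega ^ 2" "e = omega"
    unfolding posdir_def by blast
  then show ?thesis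
    by cases (simp_all only: third, auto simp: posdir_def posdir_distinct posdir_distinct[symmetric])
qed

lemma vtx_steps:
  "vtx (k + 1) l m = vtx k l m + 1" "vtx k (l + 1) m = vtx k l m + omega"
  "vtx k l (m + 1) = vtx k l m + omega ^ 2"
  by (simp_all add: vtx_def algebra_simps)

lemma vtx_in_lattice: "vtx k l m \<in> lattice"
  unfolding lattice_def by blast

lemma lattice_step:
  assumes "z \<in> lattice" "d \<in> posdir"
  shows "z + d \<in> lattice" "z - d \<in> lattice"
proof -
  obtain k l m where z: "z = vtx k l m" using assms(1) unfolding lattice_def by blast
  have "z - 1 = vtx (k - 1) l m" "z - omega = vtx k (l - 1) m" "z - omega ^ 2 = vtx k l (m - 1)"
    unfolding z by (simp_all add: vtx_def algebra_simps)
  then show "z + d \<in> lattice" "z - d \<in> lattice"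
    using assms(2) unfolding posdir_def by (auto simp: z vtx_steps[symmetric] vtx_in_lattice)
qed

definition out_diff :: "(complex \<Rightarrow> complex) \<Rightarrow> complex \<Rightarrow> complex \<Rightarrow> complex" where
  "out_diff F z d = F (z + d) - F z"

definition in_diff :: "(complex \<Rightarrow> complex) \<Rightarrow> complex \<Rightarrow> complex \<Rightarrow> complex" where
  "in_diff F z d = F z - F (z - d)"

definition star_dnm :: "(complex \<Rightarrow> complex) \<Rightarrow> (complex \<Rightarrow> complex) \<Rightarrow> complex \<Rightarrow> complex \<Rightarrow> complex" where
  "star_dnm u v z d = zigzag (out_diff u z d) (out_diff v z d) (in_diff u z d) (in_diff v z d)"

definition weight_at ::
    "(complex \<Rightarrow> complex) \<Rightarrow> (complex \<Rightarrow> complex) \<Rightarrow> complex \<Rightarrow> complex \<Rightarrow> complex \<Rightarrow> complex \<Rightarrow> complex" where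
  "weight_at u v f g z e =
     edge_weight f g (out_diff u z e) (out_diff v z e) (in_diff u z e) (in_diff v z e)"

definition term_u :: "(complex \<Rightarrow> complex) \<Rightarrow> (complex \<Rightarrow> complex) \<Rightarrow> complex \<Rightarrow> complex \<Rightarrow> complex" where
  "term_u u v z d = out_diff u z d * out_diff v z d * in_diff u z d / star_dnm u v z d"

definition term_v :: "(complex \<Rightarrow> complex) \<Rightarrow> (complex \<Rightarrow> complex) \<Rightarrow> complex \<Rightarrow> complex \<Rightarrow> complex" where
  "term_v u v z d = out_diff v z d * in_diff u z d * in_diff v z d / star_dnm u v z d"

definition term_w :: "(complex \<Rightarrow> complex) \<Rightarrow> (complex \<Rightarrow> complex) \<Rightarrow> complex \<Rightarrow> complex \<Rightarrow> complex" where
  "term_w u v z d = 1 / star_dnm u v z d"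

definition coeff_sum :: "(complex \<Rightarrow> complex) \<Rightarrow> (complex \<Rightarrow> complex) \<Rightarrow> complex" where
  "coeff_sum c T = (\<Sum>e\<in>posdir. c e * T e)"

lemma coeff_sum_weight_at:
  "f * g * coeff_sum c (term_w u v z) + coeff_sum c (term_u u v z) / f + coeff_sum c (term_v u v z) / g
   = coeff_sum c (weight_at u v f g z)"
  unfolding coeff_sum_def sum_distrib_left sum_divide_distrib sum.distrib[symmetric]
  by (rule sum.cong) (simp_all add: weight_at_def edge_weight_def term_u_def term_v_def term_w_def
      star_dnm_def add_divide_distrib distrib_left mult.commute mult.left_commute)

lemma coeff_sum_shift:
  assumes "d \<in> posdir"
  shows "coeff_sum (\<lambda>e. c e + of_bool (e = d)) T = coeff_sum c T + T d"
  using assms by (simp add: coeff_sum_def distrib_right sum.distrib posdir_def)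

locale triangle_equation =
  fixes u v :: "complex \<Rightarrow> complex"
  assumes nondeg: "\<And>z d. z \<in> lattice \<Longrightarrow> d \<in> posdir \<Longrightarrow> u (z + d) \<noteq> u z \<and> v (z + d) \<noteq> v z"
    and tri: "\<And>z1 z2 z3. z1 \<in> lattice \<Longrightarrow> z2 - z1 \<in> posdir \<Longrightarrow> z3 - z2 \<in> posdir \<Longrightarrow>
      z1 - z3 \<in> posdir \<Longrightarrow> (u z2 - u z1) / (u z3 - u z2) = (v z3 - v z2) / (v z1 - v z3)"
    and star_dnm_nonzero: "\<And>z d. z \<in> lattice \<Longrightarrow> d \<in> posdir \<Longrightarrow> star_dnm u v z d \<noteq> 0"
begin

lemma out_diff_nonzero:
  assumes "z \<in> lattice" "d \<in> posdir"
  shows "out_diff u z d \<noteq> 0" "out_diff v z d \<noteq> 0"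
  using nondeg[OF assms] unfolding out_diff_def by auto

lemma triangle_zigzag:
  assumes z: "z \<in> lattice" and d: "d \<in> posdir" and e: "e \<in> posdir" and "d \<noteq> e"
  shows "zigzag (out_diff u z d) (out_diff v z d) (in_diff u z e) (in_diff v z e) = 0"
proof -
  define t where "t = - (d + e)"
  have t: "t \<in> posdir" using posdir_third[OF d e \<open>d \<noteq> e\<close>] unfolding t_def by blast
  have corner: "z + d + t = z - e" "(z - e) - (z + d) = t" unfolding t_def by simp_all
  have "(u (z + d) - u z) / (u (z - e) - u (z + d)) = (v (z - e) - v (z + d)) / (v z - v (z - e))"
    using tri[OF z] d e t corner by simp
  moreover have "u (z - e) - u (z + d) \<noteq> 0"
    using nondeg[OF lattice_step(1)[OF z d] t] corner by simp
  moreover have "v z - v (z - e) \<noteq> 0"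
    using nondeg[OF lattice_step(2)[OF z e] e] by simp
  ultimately have "(u (z + d) - u z) * (v z - v (z - e)) = (v (z - e) - v (z + d)) * (u (z - e) - u (z + d))"
    by (simp add: frac_eq_eq)
  then show ?thesis unfolding zigzag_def out_diff_def in_diff_def by algebra
qed

lemma weight_at_diag:
  assumes z: "z \<in> lattice" and d: "d \<in> posdir"
  shows "weight_at u v (out_diff u z d) (out_diff v z d) z d = 1"
    and "weight_at u v (out_diff u z d) (out_diff v z d) (z + d) d = 1"
proof -
  have "in_diff F (z + d) d = out_diff F z d" for F by (simp add: in_diff_def out_diff_def)
  then show "weight_at u v (out_diff u z d) (out_diff v z d) z d = 1"
    and "weight_at u v (out_diff u z d) (out_diff v z d) (z + d) d = 1"
    using edge_weight_diag[OF out_diff_nonzero[OF z d]]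
      star_dnm_nonzero[OF z d] star_dnm_nonzero[OF lattice_step(1)[OF z d] d]
    unfolding weight_at_def star_dnm_def by simp_all
qed

lemma weight_at_shift:
  assumes z: "z \<in> lattice" and d: "d \<in> posdir" and e: "e \<in> posdir"
  shows "weight_at u v (out_diff u z d) (out_diff v z d) (z + d) e
       = weight_at u v (out_diff u z d) (out_diff v z d) z e"
proof (cases "e = d")
  case True
  then show ?thesis using weight_at_diag[OF z d] by simp
next
  case False
  define t where "t = - (d + e)"
  have t: "t \<in> posdir" "t \<noteq> d" "t \<noteq> e"
    using posdir_third[OF d e] False unfolding t_def by auto
  have corners: "z + d + e = z - t" "z + d + t = z - e" unfolding t_def by simp_all
  have out_next: "out_diff F (z + d) e = - (out_diff F z d + in_diff F z t)"
    "out_diff F (z + d) t = - (out_diff F z d + in_diff F z e)" for F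
    unfolding out_diff_def in_diff_def add.assoc[symmetric] corners by simp_all
  have zd: "z + d \<in> lattice" using lattice_step[OF z d] by blast
  show ?thesis
    unfolding weight_at_def out_next(1)
  proof (rule edge_weight_shift)
    show "zigzag (out_diff u z d) (out_diff v z d) (in_diff u z e) (in_diff v z e) = 0"
      "zigzag (out_diff u z d) (out_diff v z d) (in_diff u z t) (in_diff v z t) = 0"
      "zigzag (out_diff u z e) (out_diff v z e) (in_diff u z t) (in_diff v z t) = 0"
      using triangle_zigzag z d e t False by auto
    show "zigzag (- (out_diff u z d + in_diff u z e)) (- (out_diff v z d + in_diff v z e))
        (in_diff u (z + d) e) (in_diff v (z + d) e) = 0"
      using triangle_zigzag[OF zd t(1) e t(3)] unfolding out_next .
    show "zigzag (out_diff u z e) (out_diff v z e) (in_diff u z e) (in_diff v z e) \<noteq> 0"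
      using star_dnm_nonzero[OF z e] unfolding star_dnm_def .
    show "zigzag (- (out_diff u z d + in_diff u z t)) (- (out_diff v z d + in_diff v z t))
        (in_diff u (z + d) e) (in_diff v (z + d) e) \<noteq> 0"
      using star_dnm_nonzero[OF zd e] unfolding star_dnm_def out_next .
  qed (use out_diff_nonzero[OF z d] in auto)
qed

lemma defect_edge_step:
  fixes w :: "complex \<Rightarrow> complex" and \<alpha> \<beta> z d :: complex and c :: "complex \<Rightarrow> complex"
  defines "c' \<equiv> \<lambda>e. c e + of_bool (e = d)"
  assumes z: "z \<in> lattice" and d: "d \<in> posdir"
    and w: "w (z + d) - w z = 1 / (out_diff u z d * out_diff v z d)"
    and u: "\<alpha> * u z = coeff_sum c (term_u u v z)" "\<alpha> * u (z + d) = coeff_sum c' (term_u u v (z + d))"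
    and v: "\<beta> * v z = coeff_sum c (term_v u v z)" "\<beta> * v (z + d) = coeff_sum c' (term_v u v (z + d))"
  shows "(1 - \<alpha> - \<beta>) * w (z + d) - coeff_sum c' (term_w u v (z + d))
       = (1 - \<alpha> - \<beta>) * w z - coeff_sum c (term_w u v z)"
proof -
  define f g where "f = out_diff u z d" and "g = out_diff v z d"
  have "f \<noteq> 0" "g \<noteq> 0" unfolding f_def g_def using out_diff_nonzero[OF z d] by auto
  let ?\<Delta> = "\<lambda>T. coeff_sum c' (T (z + d)) - coeff_sum c (T z)"
  have "f * g * ?\<Delta> (term_w u v) + ?\<Delta> (term_u u v) / f + ?\<Delta> (term_v u v) / g
      = coeff_sum c' (weight_at u v f g (z + d)) - coeff_sum c (weight_at u v f g z)"
    by (simp add: right_diff_distrib diff_divide_distrib flip: coeff_sum_weight_at)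
  also have "\<dots> = weight_at u v f g (z + d) d"
    using weight_at_shift[OF z d] unfolding c'_def coeff_sum_shift[OF d] f_def g_def coeff_sum_def
    by simp
  also have "\<dots> = 1"
    unfolding f_def g_def by (rule weight_at_diag(2)[OF z d])
  finally have "f * g * ?\<Delta> (term_w u v) + ?\<Delta> (term_u u v) / f + ?\<Delta> (term_v u v) / g = 1" .
  moreover have "?\<Delta> (term_u u v) = \<alpha> * f" "?\<Delta> (term_v u v) = \<beta> * g"
    unfolding f_def g_def out_diff_def by (simp_all flip: u v add: right_diff_distrib)
  ultimately have "f * g * ?\<Delta> (term_w u v) = 1 - \<alpha> - \<beta>"
    using \<open>f \<noteq> 0\<close> \<open>g \<noteq> 0\<close> by (simp add: algebra_simps)
  then have "?\<Delta> (term_w u v) = (1 - \<alpha> - \<beta>) / (f * g)"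
    using \<open>f \<noteq> 0\<close> \<open>g \<noteq> 0\<close> by (simp add: eq_divide_eq mult.commute)
  also have "\<dots> = (1 - \<alpha> - \<beta>) * (w (z + d) - w z)"
    unfolding w f_def g_def by simp
  finally show ?thesis by (simp add: algebra_simps)
qed

end

text \<open>The value \<open>0\<close> off \<^const>\<open>posdir\<close> makes the shift rules below hold for every \<open>e\<close>.\<close>

definition lattice_coef :: "int \<Rightarrow> int \<Rightarrow> int \<Rightarrow> complex \<Rightarrow> complex" where
  "lattice_coef k l m e =
     (if e = 1 then of_int k else if e = omega then of_int l else if e = omega ^ 2 then of_int m else 0)"

lemma coeff_sum_lattice_coef:
  "coeff_sum (lattice_coef k l m) T = of_int k * T 1 + of_int l * T omega + of_int m * T (omega ^ 2)"
  using posdir_distinct by (simp add: coeff_sum_def posdir_def lattice_coef_def)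

lemma lattice_coef_steps:
  "lattice_coef (k + 1) l m = (\<lambda>e. lattice_coef k l m e + of_bool (e = 1))"
  "lattice_coef k (l + 1) m = (\<lambda>e. lattice_coef k l m e + of_bool (e = omega))"
  "lattice_coef k l (m + 1) = (\<lambda>e. lattice_coef k l m e + of_bool (e = omega ^ 2))"
  using posdir_distinct by (auto simp: lattice_coef_def)

lemma int3_shift_invariant:
  fixes H :: "int \<Rightarrow> int \<Rightarrow> int \<Rightarrow> 'a"
  assumes "\<And>k l m. H (k + 1) l m = H k l m" "\<And>k l m. H k (l + 1) m = H k l m"
    and "\<And>k l m. H k l (m + 1) = H k l m"
  shows "H k l m = H 0 0 0"
proof -
  have shift: "h i = h 0" if "\<And>i. h (i + 1) = h i" for h :: "int \<Rightarrow> 'a" and i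
  proof (induction i rule: int_induct[where k = 0])
    case (step2 i)
    then show ?case using that[of "i - 1"] by simp
  qed (simp_all add: that)
  show ?thesis
    using shift[of "\<lambda>k. H k l m" k] shift[of "\<lambda>l. H 0 l m" l] shift[of "\<lambda>m. H 0 0 m" m] assms
    by simp
qed

lemma (in triangle_equation) defect_constant:
  fixes w :: "complex \<Rightarrow> complex" and \<alpha> \<beta> :: complex
  defines "H k l m \<equiv> (1 - \<alpha> - \<beta>) * w (vtx k l m)
      - coeff_sum (lattice_coef k l m) (term_w u v (vtx k l m))"
  assumes W: "\<And>z d. z \<in> lattice \<Longrightarrow> d \<in> posdir \<Longrightarrow>
      w (z + d) - w z = 1 / (out_diff u z d * out_diff v z d)"
    and U: "\<And>k l m. \<alpha> * u (vtx k l m) = coeff_sum (lattice_coef k l m) (term_u u v (vtx k l m))"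
    and V: "\<And>k l m. \<beta> * v (vtx k l m) = coeff_sum (lattice_coef k l m) (term_v u v (vtx k l m))"
  shows "H k l m = H 0 0 0"
proof (rule int3_shift_invariant)
  have dirs: "1 \<in> posdir" "omega \<in> posdir" "omega ^ 2 \<in> posdir" by (simp_all add: posdir_def)
  show "H (k + 1) l m = H k l m" for k l m
    using U[of k l m] U[of "k + 1" l m] V[of k l m] V[of "k + 1" l m]
    unfolding H_def vtx_steps lattice_coef_steps
    by (rule defect_edge_step[OF vtx_in_lattice dirs(1) W[OF vtx_in_lattice dirs(1)]])
  show "H k (l + 1) m = H k l m" for k l m
    using U[of k l m] U[of k "l + 1" m] V[of k l m] V[of k "l + 1" m]
    unfolding H_def vtx_steps lattice_coef_steps
    by (rule defect_edge_step[OF vtx_in_lattice dirs(2) W[OF vtx_in_lattice dirs(2)]])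
  show "H k l (m + 1) = H k l m" for k l m
    using U[of k l m] U[of k l "m + 1"] V[of k l m] V[of k l "m + 1"]
    unfolding H_def vtx_steps lattice_coef_steps
    by (rule defect_edge_step[OF vtx_in_lattice dirs(3) W[OF vtx_in_lattice dirs(3)]])
qed

lemma incr_eq:
  "incr F z 0 = out_diff F z 1" "incr F z 2 = out_diff F z omega" "incr F z 4 = out_diff F z (omega ^ 2)"
  "incr F z 3 = in_diff F z 1" "incr F z 5 = in_diff F z omega" "incr F z 1 = in_diff F z (omega ^ 2)"
  by (simp_all add: incr_def out_diff_def in_diff_def)

lemma dnm_eq:
  "dnm u v z 0 3 = star_dnm u v z 1" "dnm u v z 2 5 = star_dnm u v z omega"
  "dnm u v z 4 1 = star_dnm u v z (omega ^ 2)"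
  unfolding dnm_def star_dnm_def zigzag_def incr_eq by (rule refl)+

theorem proposition16:
  fixes u v w :: "complex \<Rightarrow> complex" and \<alpha> \<beta> :: complex
  assumes u0: "u 0 = 0" and v0: "v 0 = 0" and w0: "w 0 = 0"
    and nondeg: "\<forall>z\<in>lattice. \<forall>d\<in>posdir. u (z + d) \<noteq> u z \<and> v (z + d) \<noteq> v z"
    and wdef: "\<forall>z\<in>lattice. \<forall>d\<in>posdir.
        w (z + d) - w z = 1 / ((u (z + d) - u z) * (v (z + d) - v z))"
    and tri: "\<forall>z1\<in>lattice. \<forall>z2 z3.
        z2 - z1 \<in> posdir \<and> z3 - z2 \<in> posdir \<and> z1 - z3 \<in> posdir \<longrightarrow>
        (u z2 - u z1) / (u z3 - u z2) = (v z3 - v z2) / (v z1 - v z3)"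
    and dnz: "\<forall>z\<in>lattice. dnm u v z 0 3 \<noteq> 0 \<and> dnm u v z 2 5 \<noteq> 0 \<and> dnm u v z 4 1 \<noteq> 0"
    and cu: "\<forall>k l m. \<alpha> * u (vtx k l m) =
        of_int k * (incr u (vtx k l m) 0 * incr v (vtx k l m) 0 * incr u (vtx k l m) 3)
                     / dnm u v (vtx k l m) 0 3
      + of_int l * (incr u (vtx k l m) 2 * incr v (vtx k l m) 2 * incr u (vtx k l m) 5)
                     / dnm u v (vtx k l m) 2 5
      + of_int m * (incr u (vtx k l m) 4 * incr v (vtx k l m) 4 * incr u (vtx k l m) 1)
                     / dnm u v (vtx k l m) 4 1"
    and cv: "\<forall>k l m. \<beta> * v (vtx k l m) =
        of_int k * (incr v (vtx k l m) 0 * incr u (vtx k l m) 3 * incr v (vtx k l m) 3)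
                     / dnm u v (vtx k l m) 0 3
      + of_int l * (incr v (vtx k l m) 2 * incr u (vtx k l m) 5 * incr v (vtx k l m) 5)
                     / dnm u v (vtx k l m) 2 5
      + of_int m * (incr v (vtx k l m) 4 * incr u (vtx k l m) 1 * incr v (vtx k l m) 1)
                     / dnm u v (vtx k l m) 4 1"
  shows "\<forall>k l m. (1 - \<alpha> - \<beta>) * w (vtx k l m) =
        of_int k / dnm u v (vtx k l m) 0 3
      + of_int l / dnm u v (vtx k l m) 2 5
      + of_int m / dnm u v (vtx k l m) 4 1"
proof -
  interpret triangle_equation u v
    using nondeg tri dnz unfolding dnm_eq by unfold_locales (auto simp: posdir_def)
  have "(1 - \<alpha> - \<beta>) * w (vtx k l m) - coeff_sum (lattice_coef k l m) (term_w u v (vtx k l m))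
      = (1 - \<alpha> - \<beta>) * w (vtx 0 0 0) - coeff_sum (lattice_coef 0 0 0) (term_w u v (vtx 0 0 0))"
    for k l m
  proof (rule defect_constant)
    show "w (z + d) - w z = 1 / (out_diff u z d * out_diff v z d)" if "z \<in> lattice" "d \<in> posdir" for z d
      using wdef that unfolding out_diff_def by blast
    show "\<alpha> * u (vtx k l m) = coeff_sum (lattice_coef k l m) (term_u u v (vtx k l m))" for k l m
      using cu unfolding coeff_sum_lattice_coef term_u_def incr_eq dnm_eq by simp
    show "\<beta> * v (vtx k l m) = coeff_sum (lattice_coef k l m) (term_v u v (vtx k l m))" for k l m
      using cv unfolding coeff_sum_lattice_coef term_v_def incr_eq dnm_eq by simp
  qed
  then show ?thesis
    using w0 unfolding coeff_sum_lattice_coef term_w_def dnm_eq by (simp add: vtx_def algebra_simps)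
qed

end
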